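(* Assume Conditions (A), (F), (W), (B), (P) and (U) from the context hold. With $f_h(t,v)=P_hf(t,v)$ and $B_h(t,v)=P_hB(t,v)P_U$, for all $u\in\mathrm{dom}(A^{\theta_{X_0}})$, $v,w\in H$ and $s,t\in[0,t_f]$: (i) $\|f_h(s,v)-f_h(t,w)\|_H\le C(|s-t|^{1/2}+\|v-w\|_H)$; (ii) $\|P_hB(t,u)-B_h(t,u)\|_{L^0_2}\le Ch^{2\theta_U+1}(1+\|A^{\theta_{X_0}}u\|_H)$; (iii) $\|B_h(s,v)-B_h(t,w)\|_{L^0_2}\le C(|s-t|^{1/2}+\|v-w\|_H)$.
   Context: Let $t_f>0$ and $(H,(\cdot,\cdot)_H,\|\cdot\|_H)$ a real Hilbert space, $H_{\mathbb C}$ its complexification; $C$ is a generic constant independent of $h$. Condition (A): $A:\mathrm{dom}(A)\subset H\to H$ and $A_\ell:\mathrm{dom}(A_\ell)\subset H\to H$ ($\ell=1,2$) are linear with $A=A_1+A_2$ on $\mathrm{dom}(A_1)\cap\mathrm{dom}(A_2)\subseteq\mathrm{dom}(A)$; $A$ is densely defined, positive and sectorial (there is $\varphi\in(0,\pi/2)$ with $0$ and $S_\varphi=\{\lambda\in\mathbb C:\varphi<|\arg\lambda|\le\pi\}$ in the resolvent set and $\|(A-\lambda I)^{-1}\|_{\mathcal L(H_{\mathbb C})}\le C/|\lambda|$ on $S_\varphi$); $A_\ell A^{-1}$ is bounded on $H$. $A^\zeta$ are fractional powers. A number $\theta_{X_0}\in[0,1)$ is fixed. Condition (F): $f:\mathbb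 R\times H\to H$, $\theta_f\in[0,\frac12)$, $\|f(t,v)\|_H\le C(1+\|v\|_H)$, $\|A^{\theta_f}f(t,w)\|_H\le C(1+\|A^{\theta_f}w\|_H)$ for $w\in\mathrm{dom}(A^{\theta_f})$, $\|f(s,v)-f(t,w)\|_H\le C(|s-t|^{1/2}+\|v-w\|_H)$. Condition (W): $Q$ is a non-negative definite symmetric trace-class operator on a Hilbert space $U$, $W$ a $Q$-Wiener process; $L^0_2$ is the space of linear $E:Q^{1/2}U\to H$ with $\|E\|_{L^0_2}=\|EQ^{1/2}\|_{\mathcal{HS}(U,H)}<\infty$. Condition (B): $B:[0,t_f]\times H\to L^0_2$, $\theta_B\in[0,\frac12)$, $\|B(t,v)\|_{L^0_2}\le C(1+\|v\|_H)$, $\|A^{\theta_B}B(t,w)\|_{L^0_2}\le C(1+\|A^{\theta_B}w\|_H)$ for $w\in\mathrm{dom}(A^{\theta_B})$, $\|B(t,u)\|_{\mathcal L(U,H)}\le C(1+\|A^{\theta_{X_0}}u\|_H)$ for $u\in\mathrm{dom}(A^{\theta_{X_0}})$, $\|B(s,v)-B(t,w)\|_{L^0_2}\le C(|s-t|^{1/2}+\|v-w\|_H)$. Condition (P): $V_h\subset H$ ($h\in I\subset(0,\infty)$) finite-dimensional, $P_h:H\to V_h$ bounded projections with $\|(I-P_h)v\|_H\le Ch^2\|Av\|_H$ for $v\in\mathrm{dom}(A)$. Condition (U): $\theta_U\in[0,\frac12)$; $\{e_k\}$ orthonormal eigenbasis of $Q$ in $U$ with eigenvalues $q_k=\mathcal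 O(k^{-(2r+1+\varepsilon)})$, $r\ge0$, $\varepsilon>0$; $U_h=\mathrm{span}\{e_1,\dots,e_{N_U}\}$ with $(N_U+1)^{-r}\le Ch^{2\theta_U+1}$; $P_U$ orthogonal projection onto $U_h$. *)

theory Defs
  imports "HOL-Analysis.Analysis"
begin

section \<open>Unbounded linear operators given as (domain, map)\<close>

definition lin_op :: "'a::real_vector set \<Rightarrow> ('a \<Rightarrow> 'b::real_vector) \<Rightarrow> bool" where
  "lin_op D T \<longleftrightarrow> subspace D \<and>
     (\<forall>x\<in>D. \<forall>y\<in>D. T (x + y) = T x + T y) \<and> (\<forall>c. \<forall>x\<in>D. T (c *\<^sub>R x) = c *\<^sub>R T x)"

text \<open>Inverse of A (well defined when 0 is in the resolvent set).\<close>
definition op_inv :: "'h::real_vector set \<Rightarrow> ('h \<Rightarrow> 'h) \<Rightarrow> 'h \<Rightarrow> 'h" where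
  "op_inv D A z = (THE x. x \<in> D \<and> A x = z)"

definition res_op :: "'h::real_vector set \<Rightarrow> ('h \<Rightarrow> 'h) \<Rightarrow> real \<Rightarrow> 'h \<Rightarrow> 'h" where
  "res_op D A t v = (THE x. x \<in> D \<and> A x + t *\<^sub>R x = v)"

text \<open>Negative fractional power A^{-zeta}, 0 < zeta < 1, via the Balakrishnan formula.\<close>
definition frac_pow_neg :: "'h::{real_normed_vector} set \<Rightarrow> ('h \<Rightarrow> 'h) \<Rightarrow> real \<Rightarrow> 'h \<Rightarrow> 'h" where
  "frac_pow_neg D A \<zeta> v =
     (sin (pi * \<zeta>) / pi) *\<^sub>R integral {0<..} (\<lambda>t. (t powr (- \<zeta>)) *\<^sub>R res_op D A t v)"

definition frac_dom :: "'h::{real_normed_vector} set \<Rightarrow> ('h \<Rightarrow> 'h) \<Rightarrow> real \<Rightarrow> 'h set" where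
  "frac_dom D A \<zeta> = (if \<zeta> = 0 then UNIV else range (frac_pow_neg D A \<zeta>))"

definition frac_pow :: "'h::{real_normed_vector} set \<Rightarrow> ('h \<Rightarrow> 'h) \<Rightarrow> real \<Rightarrow> 'h \<Rightarrow> 'h" where
  "frac_pow D A \<zeta> w = (if \<zeta> = 0 then w else (THE v. frac_pow_neg D A \<zeta> v = w))"

text \<open>Sectoriality, stated on the complexification H_C = H x H, (x,y) ~ x + i y,
  A_C (x,y) = (A x, A y); (A_C - lambda)(x,y) = (A x - Re l x + Im l y, A y - Re l y - Im l x);
  the norm on H_C is sqrt(|x|^2 + |y|^2).\<close>
definition sectorial_op :: "'h::real_normed_vector set \<Rightarrow> ('h \<Rightarrow> 'h) \<Rightarrow> real \<Rightarrow> bool" where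
  "sectorial_op D A \<phi> \<longleftrightarrow> 0 < \<phi> \<and> \<phi> < pi / 2 \<and>
     (\<forall>z. \<exists>!x. x \<in> D \<and> A x = z) \<and> (\<exists>C. \<forall>x\<in>D. norm x \<le> C * norm (A x)) \<and>
     (\<exists>C. \<forall>l::complex. l \<noteq> 0 \<and> \<phi> < \<bar>Arg l\<bar> \<longrightarrow>
        (\<forall>z1 z2. \<exists>!p. fst p \<in> D \<and> snd p \<in> D \<and>
            A (fst p) - Re l *\<^sub>R fst p + Im l *\<^sub>R snd p = z1 \<and>
            A (snd p) - Re l *\<^sub>R snd p - Im l *\<^sub>R fst p = z2) \<and>
        (\<forall>x y. x \<in> D \<longrightarrow> y \<in> D \<longrightarrow>
            sqrt ((norm x)\<^sup>2 + (norm y)\<^sup>2) \<le> C / cmod l *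
            sqrt ((norm (A x - Re l *\<^sub>R x + Im l *\<^sub>R y))\<^sup>2 +
                  (norm (A y - Re l *\<^sub>R y - Im l *\<^sub>R x))\<^sup>2)))"

definition condA :: "'h::{real_inner,complete_space} set \<Rightarrow> ('h \<Rightarrow> 'h) \<Rightarrow> 'h set \<Rightarrow> ('h \<Rightarrow> 'h)
    \<Rightarrow> 'h set \<Rightarrow> ('h \<Rightarrow> 'h) \<Rightarrow> real \<Rightarrow> real \<Rightarrow> bool" where
  "condA D A D1 A1 D2 A2 \<phi> \<theta>X0 \<longleftrightarrow>
     lin_op D A \<and> lin_op D1 A1 \<and> lin_op D2 A2 \<and>
     D1 \<inter> D2 \<subseteq> D \<and> (\<forall>x \<in> D1 \<inter> D2. A x = A1 x + A2 x) \<and>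
     closure D = UNIV \<and> (\<forall>x\<in>D. 0 \<le> A x \<bullet> x) \<and> sectorial_op D A \<phi> \<and>
     (\<forall>z. op_inv D A z \<in> D1) \<and> (\<exists>C. \<forall>z. norm (A1 (op_inv D A z)) \<le> C * norm z) \<and>
     (\<forall>z. op_inv D A z \<in> D2) \<and> (\<exists>C. \<forall>z. norm (A2 (op_inv D A z)) \<le> C * norm z) \<and>
     0 \<le> \<theta>X0 \<and> \<theta>X0 < 1"

definition condF :: "'h::{real_inner,complete_space} set \<Rightarrow> ('h \<Rightarrow> 'h) \<Rightarrow> (real \<Rightarrow> 'h \<Rightarrow> 'h) \<Rightarrow> real \<Rightarrow> bool" where
  "condF D A f \<theta>f \<longleftrightarrow> 0 \<le> \<theta>f \<and> \<theta>f < 1/2 \<and>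
     (\<exists>C. \<forall>t v. norm (f t v) \<le> C * (1 + norm v)) \<and>
     (\<exists>C. \<forall>t. \<forall>w \<in> frac_dom D A \<theta>f. f t w \<in> frac_dom D A \<theta>f \<and>
          norm (frac_pow D A \<theta>f (f t w)) \<le> C * (1 + norm (frac_pow D A \<theta>f w))) \<and>
     (\<exists>C. \<forall>s t v w. norm (f s v - f t w) \<le> C * (\<bar>s - t\<bar> powr (1/2) + norm (v - w)))"

definition condQ :: "('u::{real_inner,complete_space} \<Rightarrow>\<^sub>L 'u) \<Rightarrow> (nat \<Rightarrow> 'u) \<Rightarrow> (nat \<Rightarrow> real) \<Rightarrow> bool" where
  "condQ Q e q \<longleftrightarrow>
     (\<forall>x y. blinfun_apply Q x \<bullet> y = x \<bullet> blinfun_apply Q y) \<and>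
     (\<forall>x. 0 \<le> blinfun_apply Q x \<bullet> x) \<and>
     (\<forall>k\<ge>1. norm (e k) = 1) \<and> (\<forall>j\<ge>1. \<forall>k\<ge>1. j \<noteq> k \<longrightarrow> e j \<bullet> e k = 0) \<and>
     closure (span (e ` {1..})) = UNIV \<and>
     (\<forall>k\<ge>1. blinfun_apply Q (e k) = q k *\<^sub>R e k \<and> 0 \<le> q k) \<and>
     q summable_on {1..}"

definition Q_half :: "(nat \<Rightarrow> 'u::real_inner) \<Rightarrow> (nat \<Rightarrow> real) \<Rightarrow> 'u \<Rightarrow> 'u" where
  "Q_half e q z = (\<Sum>\<^sub>\<infinity>k\<in>{1..}. (sqrt (q k) * (z \<bullet> e k)) *\<^sub>R e k)"

definition Q_half_U :: "(nat \<Rightarrow> 'u::real_inner) \<Rightarrow> (nat \<Rightarrow> real) \<Rightarrow> 'u set" where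
  "Q_half_U e q = range (Q_half e q)"

text \<open>||E||_{L^0_2} = ||E Q^{1/2}||_{HS(U,H)}, computed in the eigenbasis: Q^{1/2} e_k = sqrt(q_k) e_k.\<close>
definition L02_norm :: "(nat \<Rightarrow> 'u::real_inner) \<Rightarrow> (nat \<Rightarrow> real) \<Rightarrow> ('u \<Rightarrow> 'h::real_normed_vector) \<Rightarrow> real" where
  "L02_norm e q E = sqrt (\<Sum>\<^sub>\<infinity>k\<in>{1..}. (norm (E (sqrt (q k) *\<^sub>R e k)))\<^sup>2)"

definition in_L02 :: "(nat \<Rightarrow> 'u::real_inner) \<Rightarrow> (nat \<Rightarrow> real) \<Rightarrow> ('u \<Rightarrow> 'h::real_normed_vector) \<Rightarrow> bool" where
  "in_L02 e q E \<longleftrightarrow> lin_op (Q_half_U e q) E \<and>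
     (\<lambda>k. (norm (E (sqrt (q k) *\<^sub>R e k)))\<^sup>2) summable_on {1..}"

definition condB :: "'h::{real_inner,complete_space} set \<Rightarrow> ('h \<Rightarrow> 'h) \<Rightarrow> real \<Rightarrow>
    (nat \<Rightarrow> 'u::{real_inner,complete_space}) \<Rightarrow> (nat \<Rightarrow> real) \<Rightarrow> real \<Rightarrow>
    (real \<Rightarrow> 'h \<Rightarrow> 'u \<Rightarrow> 'h) \<Rightarrow> real \<Rightarrow> bool" where
  "condB D A tf e q \<theta>X0 B \<theta>B \<longleftrightarrow> 0 \<le> \<theta>B \<and> \<theta>B < 1/2 \<and>
     (\<forall>t\<in>{0..tf}. \<forall>v. in_L02 e q (B t v)) \<and>
     (\<exists>C. \<forall>t\<in>{0..tf}. \<forall>v. L02_norm e q (B t v) \<le> C * (1 + norm v)) \<and>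
     (\<exists>C. \<forall>t\<in>{0..tf}. \<forall>w \<in> frac_dom D A \<theta>B.
        (\<forall>z \<in> Q_half_U e q. B t w z \<in> frac_dom D A \<theta>B) \<and>
        in_L02 e q (\<lambda>z. frac_pow D A \<theta>B (B t w z)) \<and>
        L02_norm e q (\<lambda>z. frac_pow D A \<theta>B (B t w z)) \<le> C * (1 + norm (frac_pow D A \<theta>B w))) \<and>
     (\<exists>C. \<forall>t\<in>{0..tf}. \<forall>u \<in> frac_dom D A \<theta>X0. \<forall>z \<in> Q_half_U e q.
        norm (B t u z) \<le> C * (1 + norm (frac_pow D A \<theta>X0 u)) * norm z) \<and>
     (\<exists>C. \<forall>s\<in>{0..tf}. \<forall>t\<in>{0..tf}. \<forall>v w.
        L02_norm e q (\<lambda>z. B s v z - B t w z) \<le> C * (\<bar>s - t\<bar> powr (1/2) + norm (v - w)))"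

definition condP :: "'h::{real_inner,complete_space} set \<Rightarrow> ('h \<Rightarrow> 'h) \<Rightarrow> real set \<Rightarrow>
    (real \<Rightarrow> 'h set) \<Rightarrow> (real \<Rightarrow> 'h \<Rightarrow>\<^sub>L 'h) \<Rightarrow> bool" where
  "condP D A I V P \<longleftrightarrow> I \<subseteq> {0<..} \<and>
     (\<forall>h\<in>I. (\<exists>S. finite S \<and> V h = span S) \<and>
        (\<forall>x. blinfun_apply (P h) x \<in> V h) \<and> (\<forall>x\<in>V h. blinfun_apply (P h) x = x)) \<and>
     (\<exists>C. \<forall>h\<in>I. norm (P h) \<le> C) \<and>
     (\<exists>C. \<forall>h\<in>I. \<forall>v\<in>D. norm (v - blinfun_apply (P h) v) \<le> C * h\<^sup>2 * norm (A v))"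

definition P_U :: "(nat \<Rightarrow> 'u::real_inner) \<Rightarrow> nat \<Rightarrow> 'u \<Rightarrow> 'u" where
  "P_U e N z = (\<Sum>k\<in>{1..N}. (z \<bullet> e k) *\<^sub>R e k)"

definition condU :: "real set \<Rightarrow> (nat \<Rightarrow> real) \<Rightarrow> real \<Rightarrow> real \<Rightarrow> real \<Rightarrow> (real \<Rightarrow> nat) \<Rightarrow> bool" where
  "condU I q \<theta>U r \<epsilon> NU \<longleftrightarrow> 0 \<le> \<theta>U \<and> \<theta>U < 1/2 \<and> 0 \<le> r \<and> 0 < \<epsilon> \<and>
     (\<exists>c. \<forall>k\<ge>1. \<bar>q k\<bar> \<le> c * real k powr (- (2 * r + 1 + \<epsilon>))) \<and>
     (\<exists>C. \<forall>h\<in>I. real (NU h + 1) powr (- r) \<le> C * h powr (2 * \<theta>U + 1))"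

definition f_h :: "(real \<Rightarrow> 'h \<Rightarrow>\<^sub>L 'h) \<Rightarrow> (real \<Rightarrow> 'h \<Rightarrow> 'h) \<Rightarrow> real \<Rightarrow> real \<Rightarrow> 'h \<Rightarrow> 'h::real_normed_vector" where
  "f_h P f h t v = blinfun_apply (P h) (f t v)"

definition B_h :: "(real \<Rightarrow> 'h \<Rightarrow>\<^sub>L 'h) \<Rightarrow> (nat \<Rightarrow> 'u::real_inner) \<Rightarrow> (real \<Rightarrow> nat) \<Rightarrow>
    (real \<Rightarrow> 'h \<Rightarrow> 'u \<Rightarrow> 'h) \<Rightarrow> real \<Rightarrow> real \<Rightarrow> 'h \<Rightarrow> 'u \<Rightarrow> 'h::real_normed_vector" where
  "B_h P e NU B h t v z = blinfun_apply (P h) (B t v (P_U e (NU h) z))"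

end

theory Submission
  imports Defs
begin

(* The L^0_2-norm is computed on the vectors sqrt (q k) e_k = Q^(1/2) e_k, and on them P_U is
   the identity for k <= N_U and zero for k > N_U. So a difference of B_h values is P_h applied
   to a truncated difference of B values, which gives (iii); and P_h B - B_h only sees the tail
   k > N_U, where the bound of B in L(U,H) leaves sum_(k>N) q_k <= C (N+1)^(-2r), which gives (ii)
   via (N_U+1)^(-r) <= C h^(2 theta_U + 1). Part (i) only uses the uniform bound on P_h. *)

definition orthonormal_seq :: "(nat \<Rightarrow> 'u::real_inner) \<Rightarrow> bool" where
  "orthonormal_seq e \<longleftrightarrow> (\<forall>j\<ge>1. \<forall>k\<ge>1. e j \<bullet> e k = (if j = k then 1 else 0))"

lemma condQ_orthonormal_seq: "condQ Q e q \<Longrightarrow> orthonormal_seq e"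
  unfolding condQ_def orthonormal_seq_def by (auto simp: dot_square_norm)

lemma Q_half_basis:
  assumes "orthonormal_seq e" "k \<ge> 1"
  shows "Q_half e q (e k) = sqrt (q k) *\<^sub>R e k"
proof -
  have "Q_half e q (e k) = (\<Sum>\<^sub>\<infinity>j\<in>{k}. (sqrt (q j) * (e k \<bullet> e j)) *\<^sub>R e j)"
    unfolding Q_half_def using assms by (intro infsum_cong_neutral) (auto simp: orthonormal_seq_def)
  then show ?thesis using assms by (simp add: orthonormal_seq_def)
qed

lemma scaled_basis_in_Q_half_U:
  assumes "orthonormal_seq e" "k \<ge> 1"
  shows "sqrt (q k) *\<^sub>R e k \<in> Q_half_U e q"
  unfolding Q_half_U_def using Q_half_basis[OF assms] by (metis rangeI)

lemma P_U_basis: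
  assumes "orthonormal_seq e" "k \<ge> 1"
  shows "P_U e N (c *\<^sub>R e k) = (if k \<le> N then c *\<^sub>R e k else 0)"
proof -
  have "P_U e N (c *\<^sub>R e k) = (\<Sum>j\<in>{1..N}. if j = k then c *\<^sub>R e k else 0)"
    unfolding P_U_def using assms by (intro sum.cong) (auto simp: orthonormal_seq_def)
  then show ?thesis using assms(2) by simp
qed

lemma in_L02_zero:
  assumes "in_L02 e q E"
  shows "E 0 = 0"
proof -
  have "0 \<in> Q_half_U e q"
    using rangeI[of "Q_half e q" 0] unfolding Q_half_U_def Q_half_def by simp
  then show ?thesis
    using assms unfolding in_L02_def lin_op_def by (metis scale_zero_left)
qed

lemma in_L02_diff_summable:
  assumes "in_L02 e q E" "in_L02 e q F"
  shows "(\<lambda>k. (norm (E (sqrt (q k) *\<^sub>R e k) - F (sqrt (q k) *\<^sub>R e k)))\<^sup>2) summable_on {1..}"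
proof -
  have "(\<lambda>k. 2 * (norm (E (sqrt (q k) *\<^sub>R e k)))\<^sup>2 + 2 * (norm (F (sqrt (q k) *\<^sub>R e k)))\<^sup>2)
          summable_on {1..}"
    using assms unfolding in_L02_def by (intro summable_on_add summable_on_cmult_right) auto
  moreover have "(norm (a - b))\<^sup>2 \<le> 2 * (norm a)\<^sup>2 + 2 * (norm b)\<^sup>2" for a b :: 'b
  proof -
    have "(norm (a - b))\<^sup>2 \<le> (norm a + norm b)\<^sup>2"
      by (intro power_mono norm_triangle_ineq4) auto
    also have "\<dots> \<le> 2 * (norm a)\<^sup>2 + 2 * (norm b)\<^sup>2"
      using zero_le_power2[of "norm a - norm b"] unfolding power2_sum power2_diff by linarith
    finally show ?thesis .
  qed
  ultimately show ?thesis
    by (rule summable_on_comparison_test) auto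
qed

lemma L02_norm_le_sqrt_infsum:
  assumes "g summable_on {1..}"
    and "\<And>k. k \<ge> 1 \<Longrightarrow> (norm (E (sqrt (q k) *\<^sub>R e k)))\<^sup>2 \<le> g k"
  shows "L02_norm e q E \<le> sqrt (\<Sum>\<^sub>\<infinity>k\<in>{1..}. g k)"
proof -
  have "(\<lambda>k. (norm (E (sqrt (q k) *\<^sub>R e k)))\<^sup>2) summable_on {1..}"
    using assms by (intro summable_on_comparison_test[OF assms(1)]) auto
  then show ?thesis
    unfolding L02_norm_def using assms by (intro real_sqrt_le_mono infsum_mono) auto
qed

lemma L02_norm_le_scaled:
  assumes "0 \<le> K"
    and "(\<lambda>k. (norm (F (sqrt (q k) *\<^sub>R e k)))\<^sup>2) summable_on {1..}"
    and "\<And>k. k \<ge> 1 \<Longrightarrow> norm (E (sqrt (q k) *\<^sub>R e k)) \<le> K * norm (F (sqrt (q k) *\<^sub>R e k))"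
  shows "L02_norm e q E \<le> K * L02_norm e q F"
proof -
  have "L02_norm e q E \<le> sqrt (\<Sum>\<^sub>\<infinity>k\<in>{1..}. K\<^sup>2 * (norm (F (sqrt (q k) *\<^sub>R e k)))\<^sup>2)"
    using assms by (intro L02_norm_le_sqrt_infsum summable_on_cmult_right)
      (auto simp flip: power_mult_distrib intro: power_mono)
  also have "\<dots> = K * L02_norm e q F"
    unfolding L02_norm_def infsum_cmult_right'
    using assms(1) by (simp add: real_sqrt_mult)
  finally show ?thesis .
qed

lemma powr_decay_split:
  fixes k N :: nat
  assumes "0 \<le> r" "N < k"
  shows "real k powr - (2 * r + 1 + \<epsilon>) \<le> (real (N + 1) powr - r)\<^sup>2 * real k powr - (1 + \<epsilon>)"
proof -
  have "real k powr - (2 * r + 1 + \<epsilon>) = real k powr (- r) * real k powr (- r) * real k powr - (1 + \<epsilon>)"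
    by (simp add: powr_add[symmetric] algebra_simps)
  also have "\<dots> = (real k powr (- r))\<^sup>2 * real k powr - (1 + \<epsilon>)"
    by (simp add: power2_eq_square)
  also have "\<dots> \<le> (real (N + 1) powr - r)\<^sup>2 * real k powr - (1 + \<epsilon>)"
    using assms by (intro mult_right_mono power_mono powr_mono2') auto
  finally show ?thesis .
qed

lemma summable_on_real_powr:
  assumes "0 < \<epsilon>"
  shows "(\<lambda>k::nat. real k powr - (1 + \<epsilon>)) summable_on {1..}"
proof -
  have "summable (\<lambda>k::nat. real k powr - (1 + \<epsilon>))"
    using assms by (subst summable_real_powr_iff) auto
  then show ?thesis
    by (subst (asm) summable_on_UNIV_nonneg_real_iff[symmetric])
      (auto intro: summable_on_subset)
qed

lemma L02_norm_truncation_tail: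
  fixes E :: "'u::real_inner \<Rightarrow> 'h::real_normed_vector"
  assumes orth: "orthonormal_seq e"
    and bound: "\<And>z. z \<in> Q_half_U e q \<Longrightarrow> norm (E z) \<le> M * norm z" and "E 0 = 0"
    and decay: "\<And>k. k \<ge> 1 \<Longrightarrow> 0 \<le> q k \<and> q k \<le> c * real k powr - (2 * r + 1 + \<epsilon>)"
    and "0 \<le> M" "0 \<le> r" "0 < \<epsilon>"
  shows "L02_norm e q (\<lambda>z. E z - E (P_U e N z))
           \<le> M * sqrt (c * (\<Sum>\<^sub>\<infinity>k\<in>{1..}. real k powr - (1 + \<epsilon>))) * real (N + 1) powr - r"
proof -
  define \<rho> where "\<rho> = real (N + 1) powr - r"
  have "0 \<le> c"
    using decay[of 1] by simp
  have tail: "(norm (E (sqrt (q k) *\<^sub>R e k) - E (P_U e N (sqrt (q k) *\<^sub>R e k))))\<^sup>2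
                \<le> M\<^sup>2 * \<rho>\<^sup>2 * (c * real k powr - (1 + \<epsilon>))" if "k \<ge> 1" for k
  proof (cases "k \<le> N")
    case True
    then show ?thesis
      using P_U_basis[OF orth that] \<open>0 \<le> c\<close> by simp
  next
    case False
    have "norm (e k) = 1"
      using orth that by (simp add: orthonormal_seq_def norm_eq_sqrt_inner)
    then have "norm (sqrt (q k) *\<^sub>R e k) = sqrt (q k)"
      using decay[OF that] by simp
    then have "norm (E (sqrt (q k) *\<^sub>R e k)) \<le> M * sqrt (q k)"
      using bound[OF scaled_basis_in_Q_half_U[OF orth that]] by simp
    then have "(norm (E (sqrt (q k) *\<^sub>R e k)))\<^sup>2 \<le> (M * sqrt (q k))\<^sup>2"
      by (intro power_mono) auto
    also have "\<dots> = M\<^sup>2 * q k"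
      using decay[OF that] by (simp add: power_mult_distrib)
    also have "\<dots> \<le> M\<^sup>2 * (c * real k powr - (2 * r + 1 + \<epsilon>))"
      using decay[OF that] by (intro mult_left_mono) auto
    also have "\<dots> \<le> M\<^sup>2 * (c * (\<rho>\<^sup>2 * real k powr - (1 + \<epsilon>)))"
      using powr_decay_split[OF \<open>0 \<le> r\<close>, of N k \<epsilon>] False \<open>0 \<le> c\<close>
      unfolding \<rho>_def by (intro mult_left_mono) auto
    also have "\<dots> = M\<^sup>2 * \<rho>\<^sup>2 * (c * real k powr - (1 + \<epsilon>))"
      by (simp only: ac_simps)
    finally show ?thesis
      using P_U_basis[OF orth that] False \<open>E 0 = 0\<close> by simp
  qed
  have "L02_norm e q (\<lambda>z. E z - E (P_U e N z))
          \<le> sqrt (\<Sum>\<^sub>\<infinity>k\<in>{1..}. M\<^sup>2 * \<rho>\<^sup>2 * (c * real k powr - (1 + \<epsilon>)))"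
    using tail summable_on_real_powr[OF \<open>0 < \<epsilon>\<close>]
    by (intro L02_norm_le_sqrt_infsum summable_on_cmult_right)
  also have "\<dots> = M * sqrt (c * (\<Sum>\<^sub>\<infinity>k\<in>{1..}. real k powr - (1 + \<epsilon>))) * \<rho>"
    using \<open>0 \<le> M\<close> by (simp add: infsum_cmult_right' real_sqrt_mult \<rho>_def)
  finally show ?thesis
    unfolding \<rho>_def .
qed

lemma L02_norm_truncated_le:
  fixes T :: "'h::real_normed_vector \<Rightarrow>\<^sub>L 'h2::real_normed_vector"
  assumes orth: "orthonormal_seq e"
    and "norm T \<le> K" "E 0 = 0"
    and "(\<lambda>k. (norm (E (sqrt (q k) *\<^sub>R e k)))\<^sup>2) summable_on {1..}"
  shows "L02_norm e q (\<lambda>z. T (E (P_U e N z))) \<le> K * L02_norm e q E"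
proof (rule L02_norm_le_scaled)
  show "0 \<le> K"
    using assms(2) norm_ge_zero order_trans by blast
  fix k :: nat
  assume "k \<ge> 1"
  have "norm (T x) \<le> K * norm x" for x
    using norm_blinfun[of T x] assms(2) by (meson mult_right_mono norm_ge_zero order_trans)
  then show "norm (T (E (P_U e N (sqrt (q k) *\<^sub>R e k)))) \<le> K * norm (E (sqrt (q k) *\<^sub>R e k))"
    using P_U_basis[OF orth \<open>k \<ge> 1\<close>] \<open>E 0 = 0\<close> \<open>0 \<le> K\<close> by simp
qed (use assms in auto)

lemma condP_uniform_bound:
  assumes "condP D A I V P"
  obtains Cp where "0 \<le> Cp" "\<And>h. h \<in> I \<Longrightarrow> norm (P h) \<le> Cp"
proof -
  obtain C where "\<forall>h\<in>I. norm (P h) \<le> C"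
    using assms unfolding condP_def by blast
  then show ?thesis
    using that[of "max C 0"] by fastforce
qed

lemma f_h_lipschitz:
  assumes "condF D A f \<theta>f" "condP D A I V P"
  shows "\<exists>C. \<forall>h\<in>I. \<forall>s t v w.
           norm (f_h P f h s v - f_h P f h t w) \<le> C * (\<bar>s - t\<bar> powr (1/2) + norm (v - w))"
proof -
  obtain Cp where "0 \<le> Cp" and Cp: "\<And>h. h \<in> I \<Longrightarrow> norm (P h) \<le> Cp"
    using condP_uniform_bound[OF assms(2)] by blast
  obtain Cf where Cf: "\<forall>s t v w. norm (f s v - f t w) \<le> Cf * (\<bar>s - t\<bar> powr (1/2) + norm (v - w))"
    using assms(1) unfolding condF_def by blast
  have "norm (f_h P f h s v - f_h P f h t w) \<le> Cp * Cf * (\<bar>s - t\<bar> powr (1/2) + norm (v - w))"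
    if "h \<in> I" for h s t v w
  proof -
    have "norm (f_h P f h s v - f_h P f h t w) = norm (P h (f s v - f t w))"
      unfolding f_h_def by (simp add: blinfun.diff_right)
    also have "\<dots> \<le> norm (P h) * norm (f s v - f t w)"
      by (rule norm_blinfun)
    also have "\<dots> \<le> Cp * (Cf * (\<bar>s - t\<bar> powr (1/2) + norm (v - w)))"
      using Cp Cf that \<open>0 \<le> Cp\<close> by (intro mult_mono) auto
    finally show ?thesis
      by (simp only: mult.assoc)
  qed
  then show ?thesis
    by blast
qed

lemma B_h_truncation_error:
  assumes "condQ Q e q" "condB D A tf e q \<theta>X0 B \<theta>B" "condP D A I V P" "condU I q \<theta>U r \<epsilon> NU"
  shows "\<exists>C. \<forall>h\<in>I. \<forall>t\<in>{0..tf}. \<forall>u \<in> frac_dom D A \<theta>X0.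
           L02_norm e q (\<lambda>z. P h (B t u z) - B_h P e NU B h t u z)
             \<le> C * h powr (2 * \<theta>U + 1) * (1 + norm (frac_pow D A \<theta>X0 u))"
proof -
  obtain Cp where "0 \<le> Cp" and Cp: "\<And>h. h \<in> I \<Longrightarrow> norm (P h) \<le> Cp"
    using condP_uniform_bound[OF assms(3)] by blast
  obtain CB where CB: "\<forall>t\<in>{0..tf}. \<forall>u \<in> frac_dom D A \<theta>X0. \<forall>z \<in> Q_half_U e q.
                        norm (B t u z) \<le> CB * (1 + norm (frac_pow D A \<theta>X0 u)) * norm z"
    using assms(2) unfolding condB_def by blast
  obtain c where c: "\<forall>k\<ge>1. \<bar>q k\<bar> \<le> c * real k powr - (2 * r + 1 + \<epsilon>)"
    using assms(4) unfolding condU_def by blast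
  obtain Cu where Cu: "\<forall>h\<in>I. real (NU h + 1) powr - r \<le> Cu * h powr (2 * \<theta>U + 1)"
    using assms(4) unfolding condU_def by blast
  have "0 \<le> r" "0 < \<epsilon>"
    using assms(4) unfolding condU_def by auto
  have decay: "0 \<le> q k \<and> q k \<le> c * real k powr - (2 * r + 1 + \<epsilon>)" if "k \<ge> 1" for k
    using c assms(1) that unfolding condQ_def by fastforce
  define K where "K = sqrt (c * (\<Sum>\<^sub>\<infinity>k\<in>{1..}. real k powr - (1 + \<epsilon>)))"
  have "0 \<le> K"
    using decay[of 1] unfolding K_def by (simp add: infsum_nonneg)
  define CB' where "CB' = max CB 0"
  have "L02_norm e q (\<lambda>z. P h (B t u z) - B_h P e NU B h t u z)
          \<le> (Cp * CB' * K * Cu) * h powr (2 * \<theta>U + 1) * (1 + norm (frac_pow D A \<theta>X0 u))"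
    if h: "h \<in> I" and t: "t \<in> {0..tf}" and u: "u \<in> frac_dom D A \<theta>X0" for h t u
  proof -
    define a where "a = 1 + norm (frac_pow D A \<theta>X0 u)"
    have "0 \<le> CB'" "0 \<le> a"
      unfolding CB'_def a_def by simp_all
    have bound: "norm (P h (B t u z)) \<le> Cp * CB' * a * norm z" if "z \<in> Q_half_U e q" for z
    proof -
      have "norm (B t u z) \<le> CB * a * norm z"
        using CB t u that unfolding a_def by blast
      also have "\<dots> \<le> CB' * a * norm z"
        unfolding CB'_def using \<open>0 \<le> a\<close> by (intro mult_right_mono) auto
      finally have "norm (B t u z) \<le> CB' * a * norm z" .
      then have "norm (P h) * norm (B t u z) \<le> Cp * (CB' * a * norm z)"
        using Cp[OF h] \<open>0 \<le> Cp\<close> by (intro mult_mono) auto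
      then show ?thesis
        using norm_blinfun[of "P h" "B t u z"] by (simp add: mult.assoc)
    qed
    have "P h (B t u 0) = 0"
      using in_L02_zero assms(2) t unfolding condB_def by (metis blinfun.zero_right)
    then have "L02_norm e q (\<lambda>z. P h (B t u z) - B_h P e NU B h t u z)
                 \<le> Cp * CB' * a * K * real (NU h + 1) powr - r"
      unfolding B_h_def K_def using condQ_orthonormal_seq[OF assms(1)] bound decay
        \<open>0 \<le> r\<close> \<open>0 < \<epsilon>\<close> \<open>0 \<le> Cp\<close> \<open>0 \<le> CB'\<close> \<open>0 \<le> a\<close>
      by (intro L02_norm_truncation_tail) auto
    also have "\<dots> \<le> Cp * CB' * a * K * (Cu * h powr (2 * \<theta>U + 1))"
      using Cu h \<open>0 \<le> Cp\<close> \<open>0 \<le> CB'\<close> \<open>0 \<le> a\<close> \<open>0 \<le> K\<close> by (intro mult_left_mono) auto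
    finally show ?thesis
      unfolding a_def by (simp add: ac_simps)
  qed
  then show ?thesis
    by blast
qed

lemma B_h_lipschitz:
  assumes "condQ Q e q" "condB D A tf e q \<theta>X0 B \<theta>B" "condP D A I V P"
  shows "\<exists>C. \<forall>h\<in>I. \<forall>s\<in>{0..tf}. \<forall>t\<in>{0..tf}. \<forall>v w.
           L02_norm e q (\<lambda>z. B_h P e NU B h s v z - B_h P e NU B h t w z)
             \<le> C * (\<bar>s - t\<bar> powr (1/2) + norm (v - w))"
proof -
  obtain Cp where "0 \<le> Cp" and Cp: "\<And>h. h \<in> I \<Longrightarrow> norm (P h) \<le> Cp"
    using condP_uniform_bound[OF assms(3)] by blast
  obtain CB where CB: "\<forall>s\<in>{0..tf}. \<forall>t\<in>{0..tf}. \<forall>v w.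
        L02_norm e q (\<lambda>z. B s v z - B t w z) \<le> CB * (\<bar>s - t\<bar> powr (1/2) + norm (v - w))"
    using assms(2) unfolding condB_def by blast
  have "L02_norm e q (\<lambda>z. B_h P e NU B h s v z - B_h P e NU B h t w z)
          \<le> Cp * CB * (\<bar>s - t\<bar> powr (1/2) + norm (v - w))"
    if h: "h \<in> I" and s: "s \<in> {0..tf}" and t: "t \<in> {0..tf}" for h s t v w
  proof -
    have "in_L02 e q (B s v)" "in_L02 e q (B t w)"
      using assms(2) s t unfolding condB_def by blast+
    then have "L02_norm e q (\<lambda>z. P h (B s v (P_U e (NU h) z) - B t w (P_U e (NU h) z)))
                 \<le> Cp * L02_norm e q (\<lambda>z. B s v z - B t w z)"
      using condQ_orthonormal_seq[OF assms(1)] Cp h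
      by (intro L02_norm_truncated_le in_L02_diff_summable) (auto simp: in_L02_zero)
    also have "\<dots> \<le> Cp * (CB * (\<bar>s - t\<bar> powr (1/2) + norm (v - w)))"
      using CB s t \<open>0 \<le> Cp\<close> by (intro mult_left_mono) auto
    finally show ?thesis
      unfolding B_h_def by (simp add: blinfun.diff_right mult.assoc)
  qed
  then show ?thesis
    by blast
qed

theorem lemma3p5:
  fixes D D1 D2 :: "'h::{real_inner,complete_space} set"
    and A A1 A2 :: "'h \<Rightarrow> 'h"
    and f :: "real \<Rightarrow> 'h \<Rightarrow> 'h"
    and Q :: "'u::{real_inner,complete_space} \<Rightarrow>\<^sub>L 'u"
    and e :: "nat \<Rightarrow> 'u" and q :: "nat \<Rightarrow> real"
    and B :: "real \<Rightarrow> 'h \<Rightarrow> 'u \<Rightarrow> 'h"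
    and I :: "real set" and V :: "real \<Rightarrow> 'h set" and P :: "real \<Rightarrow> 'h \<Rightarrow>\<^sub>L 'h"
    and NU :: "real \<Rightarrow> nat"
    and tf \<phi> \<theta>X0 \<theta>f \<theta>B \<theta>U r \<epsilon> :: real
  assumes "0 < tf"
    and "condA D A D1 A1 D2 A2 \<phi> \<theta>X0"
    and "condF D A f \<theta>f"
    and "condQ Q e q"
    and "condB D A tf e q \<theta>X0 B \<theta>B"
    and "condP D A I V P"
    and "condU I q \<theta>U r \<epsilon> NU"
  shows "(\<exists>C. \<forall>h\<in>I. \<forall>s\<in>{0..tf}. \<forall>t\<in>{0..tf}. \<forall>v w.
            norm (f_h P f h s v - f_h P f h t w) \<le> C * (\<bar>s - t\<bar> powr (1/2) + norm (v - w)))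
       \<and> (\<exists>C. \<forall>h\<in>I. \<forall>t\<in>{0..tf}. \<forall>u \<in> frac_dom D A \<theta>X0.
            L02_norm e q (\<lambda>z. blinfun_apply (P h) (B t u z) - B_h P e NU B h t u z)
              \<le> C * h powr (2 * \<theta>U + 1) * (1 + norm (frac_pow D A \<theta>X0 u)))
       \<and> (\<exists>C. \<forall>h\<in>I. \<forall>s\<in>{0..tf}. \<forall>t\<in>{0..tf}. \<forall>v w.
            L02_norm e q (\<lambda>z. B_h P e NU B h s v z - B_h P e NU B h t w z)
              \<le> C * (\<bar>s - t\<bar> powr (1/2) + norm (v - w)))"
proof (intro conjI)
  show "\<exists>C. \<forall>h\<in>I. \<forall>s\<in>{0..tf}. \<forall>t\<in>{0..tf}. \<forall>v w.
          norm (f_h P f h s v - f_h P f h t w) \<le> C * (\<bar>s - t\<bar> powr (1/2) + norm (v - w))"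
    using f_h_lipschitz[OF assms(3,6)] by blast
qed (fact B_h_truncation_error[OF assms(4,5,6,7)] B_h_lipschitz[OF assms(4,5,6)])+

end
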